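(* Let $n\ge 3$, $0<m<\frac{n-2}{n}$, $\eta_0>0$, $\rho_1>0$, let $\beta$ satisfy $-\frac{\rho_1}{2}<\beta<\frac{m\rho_1}{n-2-nm}$, and let $\alpha=\frac{2\beta+\rho_1}{1-m}$. Let $r_0>0$ and let $f\in C^1([0,r_0);\mathbb{R})\cap C^2((0,r_0);\mathbb{R})$ be a radially symmetric solution in $B_{r_0}$ of $$(f^m/m)_{rr}+\frac{n-1}{r}(f^m/m)_r+\alpha f+\beta r f_r=0,\quad f>0,\quad 0<r<r_0,$$ with $f(0)=\eta_0$, $f_r(0)=0$. Then $f_r(r)<0$ for all $0<r<r_0$.
   Context: $B_R=\{x\in\mathbb{R}^n:|x|<R\}$; $r=|x|$ and $f_r$ is the radial derivative. *)

theory Defs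
  imports "HOL-Analysis.Analysis"
begin

end

theory Submission
  imports Defs
begin

(* With u = f^m/m the equation reads (r^(n-1) u_r)' = - r^(n-1) (alpha f + beta r f_r).
   As alpha f(0) > 0, the flux r^(n-1) u_r = r^(n-1) f^(m-1) f_r starts at 0 and decreases,
   so f_r < 0 near 0. The bounds on m and beta give alpha > n beta, and the corrected flux
   K = r^(n-1) u_r + (alpha/n) r^n f satisfies K' = (alpha/n - beta) r^n f_r. At a first point
   c > 0 with f_r(c) >= 0, K would decrease on (0, c) from K(0) = 0, forcing u_r(c) < 0,
   i.e. f_r(c) < 0. *)

lemma alpha_beta_bounds:
  fixes n :: nat and m \<rho>1 \<beta> \<alpha> :: real
  assumes n3: "n \<ge> 3"
    and m_pos: "0 < m" and m_lt: "m < (real n - 2) / real n"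
    and rho1: "\<rho>1 > 0"
    and beta_lo: "- \<rho>1 / 2 < \<beta>"
    and beta_hi: "\<beta> < m * \<rho>1 / (real n - 2 - real n * m)"
    and alpha_def: "\<alpha> = (2 * \<beta> + \<rho>1) / (1 - m)"
  shows "0 < \<alpha>" and "real n * \<beta> < \<alpha>"
proof -
  have "(real n - 2) / real n < 1" using n3 by (simp add: divide_less_eq)
  with m_lt have m1: "m < 1" by linarith
  then show "0 < \<alpha>" using alpha_def beta_lo by simp
  have D: "real n - 2 - real n * m > 0"
    using m_lt n3 by (simp add: less_divide_eq algebra_simps)
  have "\<beta> * (real n - 2 - real n * m) < \<rho>1"
  proof (cases "\<beta> \<le> 0")
    case True
    then have "\<beta> * (real n - 2 - real n * m) \<le> 0"
      using D by (simp add: mult_nonpos_nonneg)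
    with rho1 show ?thesis by linarith
  next
    case False
    have "\<beta> * (real n - 2 - real n * m) < m * \<rho>1"
      using beta_hi D by (simp add: less_divide_eq)
    also have "\<dots> < \<rho>1" using m1 rho1 by simp
    finally show ?thesis .
  qed
  moreover have "(1 - m) * (\<alpha> - real n * \<beta>) = \<rho>1 - \<beta> * (real n - 2 - real n * m)"
    using alpha_def m1 by (simp add: field_simps)
  ultimately have "0 < (1 - m) * (\<alpha> - real n * \<beta>)" by linarith
  then show "real n * \<beta> < \<alpha>"
    using m1 by (simp add: zero_less_mult_iff)
qed

lemma has_real_derivative_radial_flux:
  fixes w :: "real \<Rightarrow> real" and n :: nat
  assumes "0 < r" and "0 < n" and "(w has_real_derivative w') (at r)"
  shows "((\<lambda>s. s ^ (n - 1) * w s) has_real_derivative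
            r ^ (n - 1) * (w' + (real n - 1) / r * w r)) (at r)"
proof -
  obtain k where n: "n = Suc k"
    using \<open>0 < n\<close> gr0_implies_Suc by blast
  have "((\<lambda>s. s ^ (n - 1) * w s) has_real_derivative
          real (n - 1) * r ^ (n - 1 - 1) * w r + r ^ (n - 1) * w') (at r)"
    using DERIV_mult[OF DERIV_pow[of "n - 1" r] assms(3)] by (simp add: algebra_simps)
  moreover have "real (n - 1) * r ^ (n - 1 - 1) = r ^ (n - 1) * ((real n - 1) / r)"
    using \<open>0 < r\<close> unfolding n by (cases k) (simp_all add: field_simps)
  ultimately show ?thesis by (simp add: algebra_simps)
qed

lemma first_nonneg_point:
  fixes h :: "real \<Rightarrow> real"
  assumes cont: "continuous_on {a<..b} h" and "a < b" and "0 \<le> h b"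
    and neg: "eventually (\<lambda>s. h s < 0) (at_right a)"
  shows "\<exists>c\<in>{a<..b}. 0 \<le> h c \<and> (\<forall>s\<in>{a<..<c}. h s < 0)"
proof -
  obtain \<delta> where "a < \<delta>" and \<delta>: "\<And>s. a < s \<Longrightarrow> s < \<delta> \<Longrightarrow> h s < 0"
    using neg by (auto simp: eventually_at_right_field)
  define A where "A = {\<delta>..b} \<inter> h -` {0..}"
  have "\<delta> \<le> b" using \<delta>[of b] \<open>a < b\<close> \<open>0 \<le> h b\<close> by force
  then have "b \<in> A" using \<open>0 \<le> h b\<close> by (simp add: A_def)
  moreover have "continuous_on {\<delta>..b} h"
    using \<open>a < \<delta>\<close> by (intro continuous_on_subset[OF cont]) auto
  then have "closed A" unfolding A_def by (intro continuous_closed_preimage) auto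
  moreover have bdd: "bdd_below A" by (auto simp: A_def)
  ultimately have "Inf A \<in> A" by (intro closed_contains_Inf) auto
  moreover have "h s < 0" if "a < s" "s < Inf A" for s
  proof (rule ccontr)
    assume "\<not> h s < 0"
    then have "\<not> s < \<delta>" using \<delta>[of s] \<open>a < s\<close> by blast
    then have "s \<in> A"
      using \<open>\<not> h s < 0\<close> \<open>Inf A \<in> A\<close> \<open>s < Inf A\<close> by (auto simp: A_def)
    then show False using cInf_lower[OF _ bdd] \<open>s < Inf A\<close> by fastforce
  qed
  ultimately show ?thesis using \<open>a < \<delta>\<close> by (auto simp: A_def)
qed

locale radial_ode_solution =
  fixes n :: nat and m \<alpha> \<beta> r0 :: real and f f' f'' :: "real \<Rightarrow> real"
  assumes n_pos: "0 < n"
    and m_nonzero: "m \<noteq> 0"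
    and alpha_pos: "0 < \<alpha>"
    and n_beta_less: "real n * \<beta> < \<alpha>"
    and r0_pos: "0 < r0"
    and f_deriv: "\<And>r. r \<in> {0..<r0} \<Longrightarrow> (f has_real_derivative f' r) (at r within {0..<r0})"
    and f'_cont: "continuous_on {0..<r0} f'"
    and f'_deriv: "\<And>r. r \<in> {0<..<r0} \<Longrightarrow> (f' has_real_derivative f'' r) (at r)"
    and f_pos: "\<And>r. r \<in> {0..<r0} \<Longrightarrow> 0 < f r"
    and ode: "\<And>r. r \<in> {0<..<r0} \<Longrightarrow>
        deriv (deriv (\<lambda>s. f s powr m / m)) r
        + (real n - 1) / r * deriv (\<lambda>s. f s powr m / m) r
        + \<alpha> * f r + \<beta> * r * f' r = 0"
    and f'_0: "f' 0 = 0"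
begin

definition ur :: "real \<Rightarrow> real" where
  "ur r = f r powr (m - 1) * f' r"

definition flux :: "real \<Rightarrow> real" where
  "flux r = r ^ (n - 1) * ur r"

definition corrected_flux :: "real \<Rightarrow> real" where
  "corrected_flux r = flux r + \<alpha> / real n * (r ^ n * f r)"

lemma f_has_derivative:
  assumes "r \<in> {0<..<r0}"
  shows "(f has_real_derivative f' r) (at r)"
proof -
  have "r \<in> interior {0..<r0}" using assms by simp
  then show ?thesis using f_deriv[of r] assms at_within_interior[of r "{0..<r0}"] by auto
qed

lemma f_continuous: "continuous_on {0..<r0} f"
  using f_deriv DERIV_continuous continuous_on_eq_continuous_within by blast

lemma u_has_derivative:
  assumes "r \<in> {0<..<r0}"
  shows "((\<lambda>s. f s powr m / m) has_real_derivative ur r) (at r)"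
proof -
  have "((\<lambda>s. f s powr m) has_real_derivative m * f r powr (m - of_nat 1) * f' r) (at r)"
    by (rule DERIV_fun_powr[OF f_has_derivative[OF assms]]) (use assms f_pos in auto)
  from DERIV_cdivide[OF this, of m] show ?thesis
    using m_nonzero by (simp add: ur_def)
qed

lemma ur_differentiable:
  assumes "r \<in> {0<..<r0}"
  shows "ur differentiable (at r)"
proof -
  have "((\<lambda>s. f s powr (m - 1)) has_real_derivative
          (m - 1) * f r powr (m - 1 - of_nat 1) * f' r) (at r)"
    by (rule DERIV_fun_powr[OF f_has_derivative[OF assms]]) (use assms f_pos in auto)
  from DERIV_mult[OF this f'_deriv[OF assms]] show ?thesis
    unfolding ur_def[abs_def] real_differentiable_def by blast
qed

lemma ode_ur:
  assumes "r \<in> {0<..<r0}"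
  shows "deriv ur r + (real n - 1) / r * ur r + \<alpha> * f r + \<beta> * r * f' r = 0"
proof -
  have "eventually (\<lambda>s. s \<in> {0<..<r0}) (nhds r)"
    using assms by (intro eventually_nhds_in_open) auto
  then have "eventually (\<lambda>s. deriv (\<lambda>s. f s powr m / m) s = ur s) (nhds r)"
    by eventually_elim (use u_has_derivative DERIV_imp_deriv in blast)
  then have "deriv (deriv (\<lambda>s. f s powr m / m)) r = deriv ur r"
    by (rule deriv_cong_ev) simp
  with ode[OF assms] DERIV_imp_deriv[OF u_has_derivative[OF assms]] show ?thesis
    by simp
qed

lemma flux_has_derivative:
  assumes "r \<in> {0<..<r0}"
  shows "(flux has_real_derivative (- (r ^ (n - 1) * (\<alpha> * f r + \<beta> * r * f' r)))) (at r)"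
proof -
  have "(ur has_real_derivative deriv ur r) (at r)"
    using ur_differentiable[OF assms] by (simp add: DERIV_deriv_iff_real_differentiable)
  from has_real_derivative_radial_flux[OF _ n_pos this]
  have deriv_flux: "(flux has_real_derivative r ^ (n - 1) * (deriv ur r + (real n - 1) / r * ur r)) (at r)"
    using assms unfolding flux_def[abs_def] by simp
  have ode_flux: "deriv ur r + (real n - 1) / r * ur r = - (\<alpha> * f r + \<beta> * r * f' r)"
    using ode_ur[OF assms] by linarith
  show ?thesis using deriv_flux unfolding ode_flux mult_minus_right .
qed

lemma corrected_flux_has_derivative:
  assumes "r \<in> {0<..<r0}"
  shows "(corrected_flux has_real_derivative (\<alpha> / real n - \<beta>) * r ^ n * f' r) (at r)"
proof -
  have "(corrected_flux has_real_derivative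
          - (r ^ (n - 1) * (\<alpha> * f r + \<beta> * r * f' r))
          + \<alpha> / real n * (real n * r ^ (n - 1) * f r + f' r * r ^ n)) (at r)"
    unfolding corrected_flux_def[abs_def]
    using DERIV_add[OF flux_has_derivative[OF assms]
        DERIV_cmult[OF DERIV_mult[OF DERIV_pow f_has_derivative[OF assms]], of "\<alpha> / real n"]]
    by simp
  moreover have "- (r ^ (n - 1) * (\<alpha> * f r + \<beta> * r * f' r))
          + \<alpha> / real n * (real n * r ^ (n - 1) * f r + f' r * r ^ n)
        = (\<alpha> / real n - \<beta>) * r ^ n * f' r"
    using n_pos by (cases n) (simp_all add: field_simps)
  ultimately show ?thesis by simp
qed

lemma flux_continuous: "continuous_on {0..<r0} flux"
  unfolding flux_def[abs_def] ur_def[abs_def]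
  using f_continuous f'_cont f_pos
  by (intro continuous_intros) (auto, metis atLeastLessThan_iff less_irrefl)

lemma corrected_flux_continuous: "continuous_on {0..<r0} corrected_flux"
  unfolding corrected_flux_def[abs_def]
  using flux_continuous f_continuous by (intro continuous_intros)

lemma flux_0: "flux 0 = 0" and corrected_flux_0: "corrected_flux 0 = 0"
  using n_pos by (simp_all add: corrected_flux_def flux_def ur_def f'_0)

lemma flux_neg_iff:
  assumes "r \<in> {0<..<r0}"
  shows "flux r < 0 \<longleftrightarrow> f' r < 0"
  using assms f_pos[of r] by (simp add: flux_def ur_def mult_less_0_iff)

lemma f'_neg_near_0: "eventually (\<lambda>r. f' r < 0) (at_right 0)"
proof -
  define g where "g r = \<alpha> * f r + \<beta> * r * f' r" for r
  have "continuous_on {0..r0/2} g"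
    unfolding g_def using r0_pos
    by (intro continuous_intros continuous_on_subset[OF f_continuous]
        continuous_on_subset[OF f'_cont]) auto
  then have "(g \<longlongrightarrow> g 0) (at 0 within {0..r0/2})"
    using r0_pos unfolding continuous_on_def by auto
  then have "(g \<longlongrightarrow> g 0) (at_right 0)"
    using r0_pos at_within_Icc_at_right[of 0 "r0/2"] by simp
  moreover have "0 < g 0" using alpha_pos f_pos[of 0] r0_pos by (simp add: g_def)
  ultimately have "eventually (\<lambda>r. 0 < g r) (at_right 0)" by (rule order_tendstoD)
  then obtain \<delta> where "0 < \<delta>" and g_pos: "\<And>r. 0 < r \<Longrightarrow> r < \<delta> \<Longrightarrow> 0 < g r"
    by (auto simp: eventually_at_right_field)
  have "f' r < 0" if "0 < r" "r < min \<delta> r0" for r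
  proof -
    have "flux r < flux 0"
    proof (rule DERIV_neg_imp_decreasing_open[OF \<open>0 < r\<close>])
      fix x assume "0 < x" "x < r"
      then have "(flux has_real_derivative (- (x ^ (n - 1) * g x))) (at x)" and "0 < g x"
        using that flux_has_derivative[of x] g_pos[of x] by (auto simp: g_def)
      then show "\<exists>y. (flux has_real_derivative y) (at x) \<and> y < 0"
        using \<open>0 < x\<close> by fastforce
    qed (use that in \<open>auto intro: continuous_on_subset[OF flux_continuous]\<close>)
    then show ?thesis using flux_neg_iff[of r] that by (simp add: flux_0)
  qed
  then show ?thesis
    using \<open>0 < \<delta>\<close> r0_pos by (auto simp: eventually_at_right_field intro!: exI[of _ "min \<delta> r0"])
qed

lemma f'_neg:
  assumes r: "r \<in> {0<..<r0}"
  shows "f' r < 0"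
proof (rule ccontr)
  assume "\<not> f' r < 0"
  moreover note f'_neg_near_0
  moreover have "continuous_on {0<..r} f'"
    using r by (auto intro: continuous_on_subset[OF f'_cont])
  ultimately obtain c where c: "c \<in> {0<..r}" "0 \<le> f' c" and below: "\<forall>s\<in>{0<..<c}. f' s < 0"
    using first_nonneg_point[of 0 r f'] r by auto
  have cI: "c \<in> {0<..<r0}" using c r by auto
  then have "corrected_flux c < corrected_flux 0"
  proof (intro DERIV_neg_imp_decreasing_open[of 0 c])
    fix x assume "0 < x" "x < c"
    moreover have "0 < \<alpha> / real n - \<beta>"
      using n_beta_less n_pos by (simp add: field_simps)
    ultimately have "(\<alpha> / real n - \<beta>) * x ^ n * f' x < 0"
      using below by (simp add: mult_pos_neg)
    then show "\<exists>y. (corrected_flux has_real_derivative y) (at x) \<and> y < 0"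
      using corrected_flux_has_derivative[of x] \<open>0 < x\<close> \<open>x < c\<close> cI by auto
  qed (auto intro: continuous_on_subset[OF corrected_flux_continuous])
  then have "corrected_flux c < 0" by (simp add: corrected_flux_0)
  moreover have "0 < \<alpha> / real n * (c ^ n * f c)"
    using alpha_pos n_pos cI f_pos[of c] by simp
  ultimately have "flux c < 0"
    unfolding corrected_flux_def by linarith
  then show False using c flux_neg_iff[OF cI] by simp
qed

end

theorem lemma2p2:
  fixes n :: nat and m \<eta>0 \<rho>1 \<beta> \<alpha> r0 :: real
    and f f' f'' :: "real \<Rightarrow> real"
  assumes n3: "n \<ge> 3"
    and m_pos: "0 < m" and m_lt: "m < (real n - 2) / real n"
    and eta0: "\<eta>0 > 0" and rho1: "\<rho>1 > 0"
    and beta_lo: "- \<rho>1 / 2 < \<beta>"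
    and beta_hi: "\<beta> < m * \<rho>1 / (real n - 2 - real n * m)"
    and alpha_def: "\<alpha> = (2 * \<beta> + \<rho>1) / (1 - m)"
    and r0: "r0 > 0"
    and C1_deriv: "\<forall>r\<in>{0..<r0}. (f has_real_derivative f' r) (at r within {0..<r0})"
    and C1_cont: "continuous_on {0..<r0} f'"
    and C2_deriv: "\<forall>r\<in>{0<..<r0}. (f' has_real_derivative f'' r) (at r)"
    and C2_cont: "continuous_on {0<..<r0} f''"
    and f_pos: "\<forall>r\<in>{0<..<r0}. f r > 0"
    and ode: "\<forall>r\<in>{0<..<r0}.
        deriv (deriv (\<lambda>s. f s powr m / m)) r
        + (real n - 1) / r * deriv (\<lambda>s. f s powr m / m) r
        + \<alpha> * f r + \<beta> * r * f' r = 0"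
    and init_f: "f 0 = \<eta>0" and init_fr: "f' 0 = 0"
  shows "\<forall>r\<in>{0<..<r0}. f' r < 0"
proof -
  have "0 < \<alpha>" and "real n * \<beta> < \<alpha>"
    using alpha_beta_bounds[OF n3 m_pos m_lt rho1 beta_lo beta_hi alpha_def] by auto
  moreover have "0 < f r" if "r \<in> {0..<r0}" for r
    using that f_pos init_f eta0 by (cases "r = 0") auto
  ultimately interpret radial_ode_solution n m \<alpha> \<beta> r0 f f' f''
    using n3 m_pos r0 C1_deriv C1_cont C2_deriv ode init_fr by unfold_locales auto
  show ?thesis using f'_neg by blast
qed

end
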